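(* Let $(R,\mathfrak m,k)$ be a $2$-dimensional Cohen–Macaulay local domain and let $I=(x,y)$ be an ideal generated by a system of parameters $x,y$ of $R$. Then $$h^0(I\otimes_R I)=\ell(R/I).$$
   Context: $h^0(X):=\ell(H^0_{\mathfrak m}(X))$, where $H^0_{\mathfrak m}(X)$ is the submodule of elements of $X$ annihilated by some power of $\mathfrak m$ and $\ell$ denotes length. *)

theory Defs
  imports Main "HOL-Library.Function_Algebras" "HOL-Library.Extended_Nat"
begin

text \<open>Commutative algebra over a commutative ring given as a type 'a (R = UNIV).\<close>

definition is_ideal :: "'a::comm_ring_1 set \<Rightarrow> bool" where
  "is_ideal I \<longleftrightarrow> 0 \<in> I \<and> (\<forall>a\<in>I. \<forall>b\<in>I. a + b \<in> I) \<and> (\<forall>r. \<forall>a\<in>I. r * a \<in> I)"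

definition ideal_gen :: "'a::comm_ring_1 set \<Rightarrow> 'a set" where
  "ideal_gen S = \<Inter>{I. is_ideal I \<and> S \<subseteq> I}"

definition prime_ideal :: "'a::comm_ring_1 set \<Rightarrow> bool" where
  "prime_ideal P \<longleftrightarrow> is_ideal P \<and> P \<noteq> UNIV \<and> (\<forall>a b. a * b \<in> P \<longrightarrow> a \<in> P \<or> b \<in> P)"

definition maximal_ideal :: "'a::comm_ring_1 set \<Rightarrow> bool" where
  "maximal_ideal M \<longleftrightarrow> is_ideal M \<and> M \<noteq> UNIV \<and>
     (\<forall>J. is_ideal J \<and> M \<subseteq> J \<longrightarrow> J = M \<or> J = UNIV)"

definition noetherian_ring :: "'a::comm_ring_1 itself \<Rightarrow> bool" where
  "noetherian_ring _ \<longleftrightarrow> (\<forall>I::'a set. is_ideal I \<longrightarrow> (\<exists>F. finite F \<and> I = ideal_gen F))"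

definition local_ring :: "'a::comm_ring_1 itself \<Rightarrow> bool" where
  "local_ring _ \<longleftrightarrow> noetherian_ring TYPE('a) \<and> (\<exists>!M::'a set. maximal_ideal M)"

definition the_max_ideal :: "'a::comm_ring_1 set" where
  "the_max_ideal = (THE M. maximal_ideal M)"

definition radical :: "'a::comm_ring_1 set \<Rightarrow> 'a set" where
  "radical I = {a. \<exists>n. a ^ n \<in> I}"

definition krull_dim :: "'a::comm_ring_1 itself \<Rightarrow> enat" where
  "krull_dim _ = Sup {enat (length L - 1) | L::'a set list.
      L \<noteq> [] \<and> sorted_wrt (\<subset>) L \<and> (\<forall>P\<in>set L. prime_ideal P)}"

definition regular_sequence :: "'a::comm_ring_1 list \<Rightarrow> bool" where
  "regular_sequence xs \<longleftrightarrow> set xs \<subseteq> the_max_ideal \<and> ideal_gen (set xs) \<noteq> UNIV \<and>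
     (\<forall>i < length xs. \<forall>r. r * xs ! i \<in> ideal_gen (set (take i xs))
                           \<longrightarrow> r \<in> ideal_gen (set (take i xs)))"

definition depth :: "'a::comm_ring_1 itself \<Rightarrow> enat" where
  "depth _ = Sup {enat (length xs) | xs::'a list. regular_sequence xs}"

definition cohen_macaulay_local :: "'a::comm_ring_1 itself \<Rightarrow> bool" where
  "cohen_macaulay_local _ \<longleftrightarrow> local_ring TYPE('a) \<and> depth TYPE('a) = krull_dim TYPE('a)"

definition system_of_parameters2 :: "'a::comm_ring_1 \<Rightarrow> 'a \<Rightarrow> bool" where
  "system_of_parameters2 x y \<longleftrightarrow> krull_dim TYPE('a) = 2 \<and>
     x \<in> the_max_ideal \<and> y \<in> the_max_ideal \<and> radical (ideal_gen {x, y}) = the_max_ideal"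

text \<open>Modules: submodules of an ambient abelian group with scalar action smul.\<close>
definition submod :: "('a \<Rightarrow> 'm \<Rightarrow> 'm) \<Rightarrow> 'm::ab_group_add set \<Rightarrow> bool" where
  "submod smul S \<longleftrightarrow> 0 \<in> S \<and> (\<forall>a\<in>S. \<forall>b\<in>S. a + b \<in> S) \<and> (\<forall>a\<in>S. - a \<in> S) \<and>
     (\<forall>r. \<forall>a\<in>S. smul r a \<in> S)"

definition submod_gen :: "('a \<Rightarrow> 'm \<Rightarrow> 'm) \<Rightarrow> 'm::ab_group_add set \<Rightarrow> 'm set" where
  "submod_gen smul G = \<Inter>{S. submod smul S \<and> G \<subseteq> S}"

text \<open>Length of the quotient module M/N (N \<subseteq> M submodules): supremum of lengths of
  strict chains of submodules between N and M (these correspond to chains in M/N).\<close>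
definition qlength :: "('a \<Rightarrow> 'm \<Rightarrow> 'm) \<Rightarrow> 'm::ab_group_add set \<Rightarrow> 'm set \<Rightarrow> enat" where
  "qlength smul N M = Sup {enat (length L - 1) | L. L \<noteq> [] \<and> sorted_wrt (\<subset>) L \<and>
      (\<forall>S\<in>set L. submod smul S \<and> N \<subseteq> S \<and> S \<subseteq> M)}"

text \<open>Tensor product I \<otimes>_R I, constructed as F/N where F is the free module on I \<times> I
  (finitely supported functions I \<times> I \<rightarrow> R) and N is generated by the bilinearity relations.\<close>
definition fsmul :: "'a::comm_ring_1 \<Rightarrow> ('a \<times> 'a \<Rightarrow> 'a) \<Rightarrow> ('a \<times> 'a \<Rightarrow> 'a)" where
  "fsmul r f = (\<lambda>p. r * f p)"

definition basis_vec :: "'a::comm_ring_1 \<Rightarrow> 'a \<Rightarrow> ('a \<times> 'a \<Rightarrow> 'a)" where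
  "basis_vec a b = (\<lambda>p. if p = (a, b) then 1 else 0)"

definition free_mod :: "'a::comm_ring_1 set \<Rightarrow> ('a \<times> 'a \<Rightarrow> 'a) set" where
  "free_mod I = {f. finite {p. f p \<noteq> 0} \<and> (\<forall>p. f p \<noteq> 0 \<longrightarrow> p \<in> I \<times> I)}"

definition tensor_rels :: "'a::comm_ring_1 set \<Rightarrow> ('a \<times> 'a \<Rightarrow> 'a) set" where
  "tensor_rels I = submod_gen fsmul
     ({basis_vec (a + a') b - basis_vec a b - basis_vec a' b | a a' b. a \<in> I \<and> a' \<in> I \<and> b \<in> I}
    \<union> {basis_vec a (b + b') - basis_vec a b - basis_vec a b' | a b b'. a \<in> I \<and> b \<in> I \<and> b' \<in> I}
    \<union> {basis_vec (r * a) b - fsmul r (basis_vec a b) | r a b. a \<in> I \<and> b \<in> I}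
    \<union> {basis_vec a (r * b) - fsmul r (basis_vec a b) | r a b. a \<in> I \<and> b \<in> I})"

text \<open>H^0_m(I \<otimes> I) as a submodule of F containing N: elements of F whose class is
  annihilated by some power m^n of the maximal ideal (m^n is generated by products of
  n elements of m).\<close>
definition H0_tensor :: "'a::comm_ring_1 set \<Rightarrow> ('a \<times> 'a \<Rightarrow> 'a) set" where
  "H0_tensor I = {f \<in> free_mod I. \<exists>n. \<forall>xs. length xs = n \<and> set xs \<subseteq> the_max_ideal
                       \<longrightarrow> fsmul (prod_list xs) f \<in> tensor_rels I}"

definition h0_tensor_self :: "'a::comm_ring_1 set \<Rightarrow> enat" where
  "h0_tensor_self I = qlength fsmul (tensor_rels I) (H0_tensor I)"

definition length_quot :: "'a::comm_ring_1 set \<Rightarrow> enat" where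
  "length_quot I = qlength (*) I UNIV"

end

theory Submission
  imports Defs
begin

text \<open>Since \<open>R\<close> is a domain, every \<open>m\<close>-torsion element of \<open>I \<otimes> I\<close> lies in the kernel of the
  multiplication map \<open>I \<otimes> I \<rightarrow> R\<close>. As \<open>x, y\<close> is a regular sequence, the syzygies of
  \<open>x\<^sup>2, x y, y\<^sup>2\<close> are the Koszul ones, so this kernel is generated by \<open>w = x \<otimes> y - y \<otimes> x\<close>;
  and \<open>w\<close> is killed by \<open>I \<supseteq> m\<^sup>n\<close>, so \<open>H\<^sup>0\<^sub>m(I \<otimes> I) = R w\<close>. The annihilator of \<open>w\<close> is
  exactly \<open>I\<close>: pairing the \<open>x\<close>-coefficient of the first factor with the \<open>y\<close>-coefficient of
  the second is well defined on \<open>I \<otimes> I\<close> modulo \<open>I\<close> and sends \<open>w\<close> to \<open>1\<close>. Hence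
  \<open>H\<^sup>0\<^sub>m(I \<otimes> I) \<cong> R/I\<close>. That \<open>x, y\<close> is a regular sequence comes from \<open>depth R = 2\<close>:
  for \<open>z \<noteq> 0\<close> one has \<open>(z) : m\<^sup>n = (z)\<close>.\<close>

subsection \<open>Ideals\<close>

lemma is_ideal_ideal_gen: "is_ideal (ideal_gen S)"
  unfolding ideal_gen_def is_ideal_def by blast

lemma ideal_gen_subset: "S \<subseteq> ideal_gen S"
  unfolding ideal_gen_def by blast

lemma ideal_gen_least: "is_ideal J \<Longrightarrow> S \<subseteq> J \<Longrightarrow> ideal_gen S \<subseteq> J"
  unfolding ideal_gen_def by blast

lemma ideal_zero: "is_ideal I \<Longrightarrow> 0 \<in> I"
  unfolding is_ideal_def by blast

lemma ideal_add: "is_ideal I \<Longrightarrow> a \<in> I \<Longrightarrow> b \<in> I \<Longrightarrow> a + b \<in> I"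
  unfolding is_ideal_def by blast

lemma ideal_mult_left: "is_ideal I \<Longrightarrow> a \<in> I \<Longrightarrow> r * a \<in> I"
  unfolding is_ideal_def by blast

lemma ideal_mult_right: "is_ideal I \<Longrightarrow> a \<in> I \<Longrightarrow> a * r \<in> I"
  using ideal_mult_left[of I a r] by (simp add: mult.commute)

lemma ideal_diff: "is_ideal I \<Longrightarrow> a \<in> I \<Longrightarrow> b \<in> I \<Longrightarrow> a - b \<in> I"
  using ideal_add[of I a "- b"] ideal_mult_left[of I b "- 1"] by simp

lemma ideal_gen_insert:
  fixes g :: "'a::comm_ring_1"
  shows "ideal_gen (insert g S) = {r * g + h | r h. h \<in> ideal_gen S}"
proof
  let ?R = "{r * g + h | r h. h \<in> ideal_gen S}"
  have S: "is_ideal (ideal_gen S)" by (rule is_ideal_ideal_gen)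
  have R: "is_ideal ?R"
    unfolding is_ideal_def
  proof (intro conjI ballI allI)
    show "0 \<in> ?R" using ideal_zero[OF S] by (intro CollectI exI[of _ 0]) auto
  next
    fix a b assume "a \<in> ?R" "b \<in> ?R"
    then obtain r1 h1 r2 h2 where "a = r1 * g + h1" "h1 \<in> ideal_gen S" "b = r2 * g + h2" "h2 \<in> ideal_gen S"
      by blast
    then show "a + b \<in> ?R"
      using ideal_add[OF S, of h1 h2]
      by (intro CollectI exI[of _ "r1 + r2"] exI[of _ "h1 + h2"]) (auto simp: algebra_simps)
  next
    fix c a assume "a \<in> ?R"
    then obtain r h where "a = r * g + h" "h \<in> ideal_gen S" by blast
    then show "c * a \<in> ?R"
      using ideal_mult_left[OF S, of h c]
      by (intro CollectI exI[of _ "c * r"] exI[of _ "c * h"]) (auto simp: algebra_simps)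
  qed
  moreover have "g \<in> ?R" using ideal_zero[OF S] by (intro CollectI exI[of _ 1] exI[of _ 0]) auto
  moreover have "s \<in> ?R" if "s \<in> S" for s
    using that ideal_gen_subset[of S] by (intro CollectI exI[of _ 0] exI[of _ s]) auto
  ultimately have "insert g S \<subseteq> ?R" by blast
  then show "ideal_gen (insert g S) \<subseteq> ?R" by (rule ideal_gen_least[OF R])
next
  have "ideal_gen S \<subseteq> ideal_gen (insert g S)"
    using ideal_gen_subset[of "insert g S"] by (intro ideal_gen_least[OF is_ideal_ideal_gen]) auto
  moreover have "g \<in> ideal_gen (insert g S)" using ideal_gen_subset by blast
  ultimately show "{r * g + h | r h. h \<in> ideal_gen S} \<subseteq> ideal_gen (insert g S)"
    using ideal_add[OF is_ideal_ideal_gen] ideal_mult_left[OF is_ideal_ideal_gen] by blast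
qed

lemma ideal_gen_empty: "ideal_gen {} = {0::'a::comm_ring_1}"
proof -
  have "is_ideal {0::'a}" unfolding is_ideal_def by auto
  then have "ideal_gen {} \<subseteq> {0::'a}" by (rule ideal_gen_least) auto
  then show ?thesis using ideal_zero[OF is_ideal_ideal_gen, of "{}::'a set"] by blast
qed

lemma ideal_gen_singleton: "ideal_gen {g} = {r * g | r. True}"
  unfolding ideal_gen_insert ideal_gen_empty by auto

lemma ideal_gen_pair: "ideal_gen {g, g'} = {a * g + b * g' | a b. True}"
  unfolding ideal_gen_insert[of g] ideal_gen_singleton by auto

text \<open>\<open>power_gens M n\<close> generates \<open>M\<^sup>n\<close>, so for an ideal \<open>I\<close> the inclusion \<open>M\<^sup>n \<subseteq> I\<close> is
  \<open>power_gens M n \<subseteq> I\<close>.\<close>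
definition power_gens :: "'a::comm_ring_1 set \<Rightarrow> nat \<Rightarrow> 'a set" where
  "power_gens M n = {prod_list xs | xs. length xs = n \<and> set xs \<subseteq> M}"

lemma power_gens_subset_ideal_mono:
  assumes "is_ideal I" "power_gens M n \<subseteq> I" "n \<le> k"
  shows "power_gens M k \<subseteq> I"
proof
  fix a assume "a \<in> power_gens M k"
  then obtain ys where ys: "a = prod_list ys" "length ys = k" "set ys \<subseteq> M"
    unfolding power_gens_def by blast
  have "prod_list (take n ys) \<in> I"
    using assms(2,3) ys set_take_subset[of n ys] unfolding power_gens_def by force
  moreover have "a = prod_list (take n ys) * prod_list (drop n ys)"
    by (metis ys(1) append_take_drop_id prod_list.append)
  ultimately show "a \<in> I" using ideal_mult_right[OF assms(1)] by simp
qed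

text \<open>Expanding a product of elements \<open>r g + h\<close> with \<open>h \<in> H\<close>, every monomial has
  either \<open>e\<close> factors \<open>g\<close> or \<open>n\<close> factors from \<open>H\<close>.\<close>
lemma prod_list_expansion_in_ideal:
  assumes I: "is_ideal I" and n: "power_gens H n \<subseteq> I" and e: "g ^ e \<in> I"
  shows "set xs \<subseteq> {r * g + h | r h. h \<in> H} \<Longrightarrow> set ys \<subseteq> H \<Longrightarrow> length xs + i + length ys = n + e
    \<Longrightarrow> prod_list xs * g ^ i * prod_list ys \<in> I"
proof (induction xs arbitrary: i ys)
  case Nil
  show ?case
  proof (cases "e \<le> i")
    case True
    then have "g ^ i = g ^ e * g ^ (i - e)" by (simp flip: power_add)
    then show ?thesis using ideal_mult_right[OF I] e by simp
  next
    case False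
    then have "prod_list ys \<in> power_gens H (length ys)" "n \<le> length ys"
      using Nil.prems unfolding power_gens_def by auto
    then have "prod_list ys \<in> I" using power_gens_subset_ideal_mono[OF I n] by blast
    then show ?thesis using ideal_mult_left[OF I] by simp
  qed
next
  case (Cons b xs)
  then obtain r h where b: "b = r * g + h" "h \<in> H" by auto
  have "prod_list xs * g ^ Suc i * prod_list ys \<in> I"
    using Cons.IH[of ys "Suc i"] Cons.prems by simp
  moreover have "prod_list xs * g ^ i * prod_list (h # ys) \<in> I"
    using Cons.IH[of "h # ys" i] Cons.prems b by simp
  moreover have "prod_list (b # xs) * g ^ i * prod_list ys
      = r * (prod_list xs * g ^ Suc i * prod_list ys) + prod_list xs * g ^ i * prod_list (h # ys)"
    using b by (simp add: algebra_simps)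
  ultimately show ?case using ideal_add[OF I] ideal_mult_left[OF I] by simp
qed

lemma power_gens_subset_if_generators_nilpotent:
  fixes I :: "'a::comm_ring_1 set"
  assumes I: "is_ideal I" and "finite G" and "\<forall>g\<in>G. \<exists>e. g ^ e \<in> I"
  shows "\<exists>n. power_gens (ideal_gen G) n \<subseteq> I"
  using assms(2,3)
proof (induction G rule: finite_induct)
  case empty
  have "power_gens {0} 1 \<subseteq> I"
    using ideal_zero[OF I] by (auto simp: power_gens_def length_Suc_conv)
  then show ?case unfolding ideal_gen_empty by blast
next
  case (insert g G)
  then obtain n e where n: "power_gens (ideal_gen G) n \<subseteq> I" and e: "g ^ e \<in> I" by auto
  have "power_gens (ideal_gen (insert g G)) (n + e) \<subseteq> I"
    using prod_list_expansion_in_ideal[OF I n e, of _ "[]" 0]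
    unfolding power_gens_def ideal_gen_insert by auto
  then show ?case by blast
qed

subsection \<open>Regular sequences of length two\<close>

lemma principal_colon_regular_pair:
  fixes u v z s :: "'a::idom"
  assumes u: "u \<noteq> 0" and v: "\<And>r. r * v \<in> ideal_gen {u} \<Longrightarrow> r \<in> ideal_gen {u}" and z: "z \<noteq> 0"
    and us: "u * s \<in> ideal_gen {z}" and vs: "v * s \<in> ideal_gen {z}"
  shows "s \<in> ideal_gen {z}"
proof -
  obtain p where p: "u * s = p * z" using us unfolding ideal_gen_singleton by auto
  obtain q where q: "v * s = q * z" using vs unfolding ideal_gen_singleton by auto
  have "z * (p * v) = z * (q * u)" using p q by (metis mult.commute mult.left_commute)
  then have "p * v = q * u" using z by simp
  then have "p \<in> ideal_gen {u}" using v unfolding ideal_gen_singleton by auto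
  then obtain c where "p = c * u" unfolding ideal_gen_singleton by auto
  then have "u * s = u * (c * z)" using p by (simp add: algebra_simps)
  then have "s = c * z" using u by simp
  then show ?thesis unfolding ideal_gen_singleton by auto
qed

lemma principal_colon_power:
  fixes u v z :: "'a::idom"
  assumes u: "u \<noteq> 0" and v: "\<And>r. r * v \<in> ideal_gen {u} \<Longrightarrow> r \<in> ideal_gen {u}" and z: "z \<noteq> 0"
    and "u \<in> M" "v \<in> M"
  shows "(\<forall>a\<in>power_gens M k. a * s \<in> ideal_gen {z}) \<Longrightarrow> s \<in> ideal_gen {z}"
proof (induction k arbitrary: s)
  case 0
  then show ?case by (simp add: power_gens_def)
next
  case (Suc k)
  have "a * s \<in> ideal_gen {z}" if "a \<in> M" for a
  proof (rule Suc.IH, intro ballI)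
    fix b assume "b \<in> power_gens M k"
    then obtain xs where "b = prod_list xs" "length xs = k" "set xs \<subseteq> M"
      unfolding power_gens_def by blast
    then have "a * b \<in> power_gens M (Suc k)"
      using that unfolding power_gens_def by (auto intro!: exI[of _ "a # xs"])
    then show "b * (a * s) \<in> ideal_gen {z}"
      using Suc.prems by (metis mult.assoc mult.commute)
  qed
  then show ?case using principal_colon_regular_pair[OF u v z] assms(4,5) by blast
qed

subsection \<open>The free module on \<open>I \<times> I\<close>\<close>

abbreviation finite_support :: "('b \<Rightarrow> 'a::zero) \<Rightarrow> bool" where
  "finite_support f \<equiv> finite {p. f p \<noteq> 0}"

lemma fsmul_add_right: "fsmul r (f + g) = fsmul r f + fsmul r g"
  by (rule ext) (simp add: fsmul_def algebra_simps)

lemma fsmul_diff_right: "fsmul r (f - g) = fsmul r f - fsmul r g"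
  by (rule ext) (simp add: fsmul_def algebra_simps)

lemma fsmul_add_left: "fsmul (a + b) f = fsmul a f + fsmul b f"
  by (rule ext) (simp add: fsmul_def algebra_simps)

lemma fsmul_diff_left: "fsmul (a - b) f = fsmul a f - fsmul b f"
  by (rule ext) (simp add: fsmul_def algebra_simps)

lemma fsmul_uminus_left: "fsmul (- a) f = - fsmul a f"
  by (rule ext) (simp add: fsmul_def)

lemma fsmul_fsmul: "fsmul r (fsmul s f) = fsmul (r * s) f"
  by (rule ext) (simp add: fsmul_def)

lemma fsmul_zero_left: "fsmul 0 f = 0"
  by (rule ext) (simp add: fsmul_def)

lemma finite_support_add:
  fixes f g :: "'b \<Rightarrow> 'a::comm_ring_1"
  shows "finite_support f \<Longrightarrow> finite_support g \<Longrightarrow> finite_support (f + g)"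
  by (rule finite_subset[of _ "{p. f p \<noteq> 0} \<union> {p. g p \<noteq> 0}"]) auto

lemma finite_support_diff:
  fixes f g :: "'b \<Rightarrow> 'a::comm_ring_1"
  shows "finite_support f \<Longrightarrow> finite_support g \<Longrightarrow> finite_support (f - g)"
  by (rule finite_subset[of _ "{p. f p \<noteq> 0} \<union> {p. g p \<noteq> 0}"]) auto

lemma finite_support_fsmul: "finite_support f \<Longrightarrow> finite_support (fsmul r f)"
  by (rule finite_subset[of _ "{p. f p \<noteq> 0}"]) (auto simp: fsmul_def)

lemma finite_support_basis_vec: "finite_support (basis_vec a b)"
  by (rule finite_subset[of _ "{(a, b)}"]) (auto simp: basis_vec_def)

definition lin_ext :: "('a \<times> 'a \<Rightarrow> 'a::comm_ring_1) \<Rightarrow> ('a \<times> 'a \<Rightarrow> 'a) \<Rightarrow> 'a" where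
  "lin_ext w f = (\<Sum>p\<in>{p. f p \<noteq> 0}. f p * w p)"

lemma lin_ext_eq_sum: "finite S \<Longrightarrow> {p. f p \<noteq> 0} \<subseteq> S \<Longrightarrow> lin_ext w f = (\<Sum>p\<in>S. f p * w p)"
  unfolding lin_ext_def by (rule sum.mono_neutral_left) auto

lemma lin_ext_add:
  assumes "finite_support f" "finite_support g"
  shows "lin_ext w (f + g) = lin_ext w f + lin_ext w g"
proof -
  let ?S = "{p. f p \<noteq> 0} \<union> {p. g p \<noteq> 0}"
  have "lin_ext w (f + g) = (\<Sum>p\<in>?S. (f + g) p * w p)"
    by (rule lin_ext_eq_sum) (use assms in auto)
  also have "\<dots> = (\<Sum>p\<in>?S. f p * w p) + (\<Sum>p\<in>?S. g p * w p)"
    by (simp add: distrib_right sum.distrib)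
  also have "\<dots> = lin_ext w f + lin_ext w g"
    using assms by (simp add: lin_ext_eq_sum[of ?S f] lin_ext_eq_sum[of ?S g])
  finally show ?thesis .
qed

lemma lin_ext_fsmul:
  assumes "finite_support f"
  shows "lin_ext w (fsmul r f) = r * lin_ext w f"
proof -
  have "lin_ext w (fsmul r f) = (\<Sum>p\<in>{p. f p \<noteq> 0}. fsmul r f p * w p)"
    by (rule lin_ext_eq_sum) (use assms in \<open>auto simp: fsmul_def\<close>)
  then show ?thesis unfolding lin_ext_def fsmul_def by (simp add: sum_distrib_left algebra_simps)
qed

lemma lin_ext_uminus:
  assumes "finite_support f"
  shows "lin_ext w (- f) = - lin_ext w f"
proof -
  have "- f = fsmul (- 1) f" by (rule ext) (simp add: fsmul_def)
  then show ?thesis using lin_ext_fsmul[OF assms, of w "- 1"] by simp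
qed

lemma lin_ext_diff:
  assumes "finite_support f" "finite_support g"
  shows "lin_ext w (f - g) = lin_ext w f - lin_ext w g"
  using lin_ext_add[of f "- g" w] lin_ext_uminus[of g w] assms by simp

lemma lin_ext_basis_vec: "lin_ext w (basis_vec a b) = w (a, b)"
  by (subst lin_ext_eq_sum[of "{(a, b)}"]) (auto simp: basis_vec_def)

lemma submod_zero: "submod sm S \<Longrightarrow> 0 \<in> S"
  unfolding submod_def by blast

lemma submod_add: "submod sm S \<Longrightarrow> a \<in> S \<Longrightarrow> b \<in> S \<Longrightarrow> a + b \<in> S"
  unfolding submod_def by blast

lemma submod_uminus: "submod sm S \<Longrightarrow> a \<in> S \<Longrightarrow> - a \<in> S"
  unfolding submod_def by blast

lemma submod_smul: "submod sm S \<Longrightarrow> a \<in> S \<Longrightarrow> sm r a \<in> S"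
  unfolding submod_def by blast

lemma submod_diff: "submod sm S \<Longrightarrow> a \<in> S \<Longrightarrow> b \<in> S \<Longrightarrow> a - b \<in> S"
  using submod_add[of sm S a "- b"] submod_uminus[of sm S b] by simp

lemma submod_submod_gen: "submod sm (submod_gen sm G)"
  unfolding submod_gen_def submod_def by blast

lemma submod_gen_subset: "G \<subseteq> submod_gen sm G"
  unfolding submod_gen_def by blast

lemma submod_gen_least: "submod sm S \<Longrightarrow> G \<subseteq> S \<Longrightarrow> submod_gen sm G \<subseteq> S"
  unfolding submod_gen_def by blast

lemma submod_free_mod: "submod fsmul (free_mod I)"
  unfolding submod_def
proof (intro conjI ballI allI)
  fix f g assume f: "f \<in> free_mod I" and g: "g \<in> free_mod I"
  have "{p. (f + g) p \<noteq> 0} \<subseteq> {p. f p \<noteq> 0} \<union> {p. g p \<noteq> 0}" by auto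
  then show "f + g \<in> free_mod I"
    using f g finite_support_add[of f g] unfolding free_mod_def by blast
next
  fix f r assume f: "f \<in> free_mod I"
  then show "- f \<in> free_mod I" unfolding free_mod_def by simp
  have "{p. fsmul r f p \<noteq> 0} \<subseteq> {p. f p \<noteq> 0}" by (auto simp: fsmul_def)
  then show "fsmul r f \<in> free_mod I"
    using f finite_support_fsmul[of f r] unfolding free_mod_def by blast
qed (simp add: free_mod_def)

lemma basis_vec_in_free_mod: "a \<in> I \<Longrightarrow> b \<in> I \<Longrightarrow> basis_vec a b \<in> free_mod I"
  unfolding free_mod_def using finite_support_basis_vec[of a b] by (simp add: basis_vec_def)

lemma submod_lin_ext_preimage:
  assumes J: "is_ideal J"
  shows "submod fsmul {f. finite_support f \<and> lin_ext w f \<in> J}" (is "submod fsmul ?K")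
  unfolding submod_def
proof (intro conjI ballI allI)
  show "0 \<in> ?K" using ideal_zero[OF J] by (simp add: lin_ext_def)
next
  fix f g assume "f \<in> ?K" "g \<in> ?K"
  then show "f + g \<in> ?K"
    using ideal_add[OF J] finite_support_add[of f g] lin_ext_add[of f g w] by auto
next
  fix f r assume f: "f \<in> ?K"
  then show "- f \<in> ?K"
    using ideal_mult_left[OF J, of _ "- 1"] lin_ext_uminus[of f w] by auto
  show "fsmul r f \<in> ?K"
    using f ideal_mult_left[OF J] finite_support_fsmul[of f r] lin_ext_fsmul[of f w r] by auto
qed

definition mod_cong :: "('a::comm_ring_1 \<times> 'a \<Rightarrow> 'a) set \<Rightarrow> ('a \<times> 'a \<Rightarrow> 'a) \<Rightarrow> ('a \<times> 'a \<Rightarrow> 'a) \<Rightarrow> bool" where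
  "mod_cong N f g \<longleftrightarrow> f - g \<in> N"

lemma mod_cong_refl: "submod fsmul N \<Longrightarrow> mod_cong N f f"
  unfolding mod_cong_def using submod_zero by simp

lemma mod_cong_sym: "submod fsmul N \<Longrightarrow> mod_cong N f g \<Longrightarrow> mod_cong N g f"
  unfolding mod_cong_def using submod_uminus[of fsmul N "f - g"] by simp

lemma mod_cong_trans: "submod fsmul N \<Longrightarrow> mod_cong N f g \<Longrightarrow> mod_cong N g h \<Longrightarrow> mod_cong N f h"
  unfolding mod_cong_def using submod_add[of fsmul N "f - g" "g - h"] by simp

lemma mod_cong_add:
  "submod fsmul N \<Longrightarrow> mod_cong N f g \<Longrightarrow> mod_cong N f' g' \<Longrightarrow> mod_cong N (f + f') (g + g')"
  unfolding mod_cong_def using submod_add[of fsmul N "f - g" "f' - g'"] by (simp add: algebra_simps)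

lemma mod_cong_fsmul: "submod fsmul N \<Longrightarrow> mod_cong N f g \<Longrightarrow> mod_cong N (fsmul r f) (fsmul r g)"
  unfolding mod_cong_def using submod_smul[of fsmul N "f - g" r] by (simp add: fsmul_diff_right)

subsection \<open>The tensor relations\<close>

lemma submod_tensor_rels: "submod fsmul (tensor_rels I)"
  unfolding tensor_rels_def by (rule submod_submod_gen)

lemma tensor_rels_induct [consumes 2, case_names add_left add_right smul_left smul_right]:
  assumes S: "submod fsmul S" and f: "f \<in> tensor_rels I"
    and "\<And>a a' b. a \<in> I \<Longrightarrow> a' \<in> I \<Longrightarrow> b \<in> I \<Longrightarrow>
      basis_vec (a + a') b - basis_vec a b - basis_vec a' b \<in> S"
    and "\<And>a b b'. a \<in> I \<Longrightarrow> b \<in> I \<Longrightarrow> b' \<in> I \<Longrightarrow>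
      basis_vec a (b + b') - basis_vec a b - basis_vec a b' \<in> S"
    and "\<And>r a b. a \<in> I \<Longrightarrow> b \<in> I \<Longrightarrow> basis_vec (r * a) b - fsmul r (basis_vec a b) \<in> S"
    and "\<And>r a b. a \<in> I \<Longrightarrow> b \<in> I \<Longrightarrow> basis_vec a (r * b) - fsmul r (basis_vec a b) \<in> S"
  shows "f \<in> S"
proof -
  have "tensor_rels I \<subseteq> S"
    unfolding tensor_rels_def by (rule submod_gen_least[OF S]) (use assms(3-6) in blast)
  then show ?thesis using f by blast
qed

lemma tensor_rels_subset_free_mod:
  assumes I: "is_ideal I"
  shows "tensor_rels I \<subseteq> free_mod I"
proof
  fix f assume "f \<in> tensor_rels I"
  then show "f \<in> free_mod I"
    by (rule tensor_rels_induct[OF submod_free_mod])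
      (intro submod_diff[OF submod_free_mod] submod_smul[OF submod_free_mod] basis_vec_in_free_mod
        ideal_add[OF I] ideal_mult_left[OF I]; assumption)+
qed

lemma tensor_rel_add_left:
  "a \<in> I \<Longrightarrow> a' \<in> I \<Longrightarrow> b \<in> I \<Longrightarrow> basis_vec (a + a') b - basis_vec a b - basis_vec a' b \<in> tensor_rels I"
  unfolding tensor_rels_def by (rule subsetD[OF submod_gen_subset]) blast

lemma tensor_rel_add_right:
  "a \<in> I \<Longrightarrow> b \<in> I \<Longrightarrow> b' \<in> I \<Longrightarrow> basis_vec a (b + b') - basis_vec a b - basis_vec a b' \<in> tensor_rels I"
  unfolding tensor_rels_def by (rule subsetD[OF submod_gen_subset]) blast

lemma tensor_rel_smul_left:
  "a \<in> I \<Longrightarrow> b \<in> I \<Longrightarrow> basis_vec (r * a) b - fsmul r (basis_vec a b) \<in> tensor_rels I"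
  unfolding tensor_rels_def by (rule subsetD[OF submod_gen_subset]) blast

lemma tensor_rel_smul_right:
  "a \<in> I \<Longrightarrow> b \<in> I \<Longrightarrow> basis_vec a (r * b) - fsmul r (basis_vec a b) \<in> tensor_rels I"
  unfolding tensor_rels_def by (rule subsetD[OF submod_gen_subset]) blast

lemma lin_ext_tensor_rels:
  assumes J: "is_ideal J"
    and add_left: "\<And>a a' b. a \<in> I \<Longrightarrow> a' \<in> I \<Longrightarrow> b \<in> I \<Longrightarrow> w (a + a', b) - w (a, b) - w (a', b) \<in> J"
    and add_right: "\<And>a b b'. a \<in> I \<Longrightarrow> b \<in> I \<Longrightarrow> b' \<in> I \<Longrightarrow> w (a, b + b') - w (a, b) - w (a, b') \<in> J"
    and smul_left: "\<And>r a b. a \<in> I \<Longrightarrow> b \<in> I \<Longrightarrow> w (r * a, b) - r * w (a, b) \<in> J"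
    and smul_right: "\<And>r a b. a \<in> I \<Longrightarrow> b \<in> I \<Longrightarrow> w (a, r * b) - r * w (a, b) \<in> J"
    and f: "f \<in> tensor_rels I"
  shows "lin_ext w f \<in> J"
proof -
  have "f \<in> {f. finite_support f \<and> lin_ext w f \<in> J}"
    using submod_lin_ext_preimage[OF J] f
    by (induction rule: tensor_rels_induct)
      (simp_all only: mem_Collect_eq finite_support_diff finite_support_fsmul finite_support_basis_vec
        lin_ext_diff lin_ext_fsmul lin_ext_basis_vec add_left add_right smul_left smul_right simp_thms)
  then show ?thesis by blast
qed

subsection \<open>Lengths\<close>

lemma chain_lengths_mono:
  assumes "\<And>S. S \<in> A \<Longrightarrow> f S \<in> B"
    and "\<And>S S'. S \<in> A \<Longrightarrow> S' \<in> A \<Longrightarrow> S \<subset> S' \<Longrightarrow> f S \<subset> f S'"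
  shows "{enat (length L - 1) | L. L \<noteq> [] \<and> sorted_wrt (\<subset>) L \<and> (\<forall>S\<in>set L. S \<in> A)}
    \<subseteq> {enat (length L - 1) | L. L \<noteq> [] \<and> sorted_wrt (\<subset>) L \<and> (\<forall>S\<in>set L. S \<in> B)}"
proof clarify
  fix L assume L: "L \<noteq> []" "sorted_wrt (\<subset>) L" "\<forall>S\<in>set L. S \<in> A"
  have "sorted_wrt (\<subset>) (map f L)"
    using L(2,3) assms(2) by (intro sorted_wrt_map_mono[OF L(2)]) auto
  then show "\<exists>L'. enat (length L - 1) = enat (length L' - 1) \<and> L' \<noteq> [] \<and> sorted_wrt (\<subset>) L'
      \<and> (\<forall>S\<in>set L'. S \<in> B)"
    using L assms(1) by (intro exI[of _ "map f L"]) auto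
qed

lemma strict_mono_if_left_inverse:
  assumes "mono f" "g (f S) = S" "g (f S') = S'" "S \<subset> S'"
  shows "f S \<subset> f S'"
proof -
  have "f S \<subseteq> f S'" using monoD[OF assms(1)] assms(4) by blast
  moreover have "f S \<noteq> f S'"
  proof
    assume "f S = f S'"
    then have "g (f S) = g (f S')" by (rule arg_cong)
    then have "S = S'" by (simp only: assms(2,3))
    with assms(4) show False by blast
  qed
  ultimately show ?thesis by blast
qed

lemma chain_lengths_eq_if_order_iso:
  assumes f: "\<And>S. S \<in> A \<Longrightarrow> f S \<in> B \<and> g (f S) = S" and g: "\<And>J. J \<in> B \<Longrightarrow> g J \<in> A \<and> f (g J) = J"
    and "mono f" "mono g"
  shows "{enat (length L - 1) | L. L \<noteq> [] \<and> sorted_wrt (\<subset>) L \<and> (\<forall>S\<in>set L. S \<in> A)}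
    = {enat (length L - 1) | L. L \<noteq> [] \<and> sorted_wrt (\<subset>) L \<and> (\<forall>S\<in>set L. S \<in> B)}"
proof (rule subset_antisym)
  show "{enat (length L - 1) | L. L \<noteq> [] \<and> sorted_wrt (\<subset>) L \<and> (\<forall>S\<in>set L. S \<in> A)}
    \<subseteq> {enat (length L - 1) | L. L \<noteq> [] \<and> sorted_wrt (\<subset>) L \<and> (\<forall>S\<in>set L. S \<in> B)}"
  proof (rule chain_lengths_mono)
    show "f S \<in> B" if "S \<in> A" for S using f[OF that] ..
    show "f S \<subset> f S'" if "S \<in> A" "S' \<in> A" "S \<subset> S'" for S S'
      using strict_mono_if_left_inverse[OF \<open>mono f\<close> conjunct2[OF f[OF that(1)]]
          conjunct2[OF f[OF that(2)]] that(3)] .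
  qed
  show "{enat (length L - 1) | L. L \<noteq> [] \<and> sorted_wrt (\<subset>) L \<and> (\<forall>S\<in>set L. S \<in> B)}
    \<subseteq> {enat (length L - 1) | L. L \<noteq> [] \<and> sorted_wrt (\<subset>) L \<and> (\<forall>S\<in>set L. S \<in> A)}"
  proof (rule chain_lengths_mono)
    show "g J \<in> A" if "J \<in> B" for J using g[OF that] ..
    show "g J \<subset> g J'" if "J \<in> B" "J' \<in> B" "J \<subset> J'" for J J'
      using strict_mono_if_left_inverse[OF \<open>mono g\<close> conjunct2[OF g[OF that(1)]]
          conjunct2[OF g[OF that(2)]] that(3)] .
  qed
qed

definition coeff_ideal :: "('a::comm_ring_1 \<times> 'a \<Rightarrow> 'a) \<Rightarrow> ('a \<times> 'a \<Rightarrow> 'a) set \<Rightarrow> 'a set" where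
  "coeff_ideal t S = {r. fsmul r t \<in> S}"

definition cyclic_span :: "('a::comm_ring_1 \<times> 'a \<Rightarrow> 'a) set \<Rightarrow> ('a \<times> 'a \<Rightarrow> 'a) \<Rightarrow> 'a set
    \<Rightarrow> ('a \<times> 'a \<Rightarrow> 'a) set" where
  "cyclic_span N t J = {g + fsmul r t | g r. g \<in> N \<and> r \<in> J}"

lemma submod_coeff_ideal:
  assumes S: "submod fsmul S"
  shows "submod (*) (coeff_ideal t S)"
  unfolding submod_def coeff_ideal_def mem_Collect_eq
  using submod_zero[OF S] submod_add[OF S] submod_uminus[OF S] submod_smul[OF S]
  by (simp add: fsmul_zero_left fsmul_add_left fsmul_uminus_left flip: fsmul_fsmul)

lemma submod_cyclic_span:
  assumes N: "submod fsmul N" and J: "submod (*) J"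
  shows "submod fsmul (cyclic_span N t J)"
  unfolding submod_def
proof (intro conjI ballI allI)
  show "0 \<in> cyclic_span N t J" unfolding cyclic_span_def using submod_zero[OF N] submod_zero[OF J]
    by (intro CollectI exI[of _ 0]) (simp add: fsmul_zero_left)
next
  fix a b assume "a \<in> cyclic_span N t J" "b \<in> cyclic_span N t J"
  then obtain g r g' r' where "a = g + fsmul r t" "g \<in> N" "r \<in> J" "b = g' + fsmul r' t" "g' \<in> N" "r' \<in> J"
    unfolding cyclic_span_def by blast
  then show "a + b \<in> cyclic_span N t J" unfolding cyclic_span_def using submod_add[OF N] submod_add[OF J]
    by (intro CollectI exI[of _ "g + g'"] exI[of _ "r + r'"]) (simp add: fsmul_add_left algebra_simps)
next
  fix a c assume "a \<in> cyclic_span N t J"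
  then obtain g r where a: "a = g + fsmul r t" "g \<in> N" "r \<in> J" unfolding cyclic_span_def by blast
  show "- a \<in> cyclic_span N t J" unfolding cyclic_span_def using a submod_uminus[OF N a(2)] submod_uminus[OF J a(3)]
    by (intro CollectI exI[of _ "- g"] exI[of _ "- r"]) (simp add: fsmul_uminus_left)
  show "fsmul c a \<in> cyclic_span N t J" unfolding cyclic_span_def using a submod_smul[OF N a(2)] submod_smul[OF J a(3)]
    by (intro CollectI exI[of _ "fsmul c g"] exI[of _ "c * r"]) (simp add: fsmul_add_right fsmul_fsmul)
qed

lemma cyclic_span_coeff_ideal:
  assumes S: "submod fsmul S" "N \<subseteq> S" "S \<subseteq> cyclic_span N t UNIV"
  shows "cyclic_span N t (coeff_ideal t S) = S"
proof
  show "cyclic_span N t (coeff_ideal t S) \<subseteq> S"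
    unfolding cyclic_span_def coeff_ideal_def using submod_add[OF S(1)] S(2) by blast
  show "S \<subseteq> cyclic_span N t (coeff_ideal t S)"
  proof
    fix s assume "s \<in> S"
    then obtain g r where s: "s = g + fsmul r t" "g \<in> N" using S(3) unfolding cyclic_span_def by blast
    then have "fsmul r t \<in> S" using submod_diff[OF S(1) \<open>s \<in> S\<close>, of g] S(2) by auto
    then show "s \<in> cyclic_span N t (coeff_ideal t S)" unfolding cyclic_span_def coeff_ideal_def using s by blast
  qed
qed

lemma coeff_ideal_cyclic_span:
  assumes N: "submod fsmul N" and J: "submod (*) J" "coeff_ideal t N \<subseteq> J"
  shows "coeff_ideal t (cyclic_span N t J) = J"
proof
  show "J \<subseteq> coeff_ideal t (cyclic_span N t J)"
    unfolding coeff_ideal_def cyclic_span_def using submod_zero[OF N] by force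
  show "coeff_ideal t (cyclic_span N t J) \<subseteq> J"
  proof
    fix r assume "r \<in> coeff_ideal t (cyclic_span N t J)"
    then obtain g r' where e: "fsmul r t = g + fsmul r' t" "g \<in> N" "r' \<in> J"
      unfolding coeff_ideal_def cyclic_span_def by blast
    then have "r - r' \<in> coeff_ideal t N" by (simp add: coeff_ideal_def fsmul_diff_left)
    then have "r - r' \<in> J" using J(2) by blast
    from submod_add[OF J(1) this e(3)] show "r \<in> J" by simp
  qed
qed

text \<open>Submodules between \<open>N\<close> and \<open>N + R t\<close> correspond to ideals containing \<open>coeff_ideal t N\<close>.\<close>
lemma qlength_cyclic_span:
  assumes N: "submod fsmul N"
  shows "qlength fsmul N (cyclic_span N t UNIV) = length_quot (coeff_ideal t N)"
proof -
  let ?SM = "{S. submod fsmul S \<and> N \<subseteq> S \<and> S \<subseteq> cyclic_span N t UNIV}"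
  let ?IDL = "{J. submod (*) J \<and> coeff_ideal t N \<subseteq> J \<and> J \<subseteq> UNIV}"
  have SM: "coeff_ideal t S \<in> ?IDL \<and> cyclic_span N t (coeff_ideal t S) = S" if "S \<in> ?SM" for S
  proof -
    from that have S: "submod fsmul S" "N \<subseteq> S" "S \<subseteq> cyclic_span N t UNIV" by auto
    have "coeff_ideal t N \<subseteq> coeff_ideal t S" using S(2) unfolding coeff_ideal_def by blast
    then show ?thesis using submod_coeff_ideal[OF S(1)] cyclic_span_coeff_ideal[OF S] by blast
  qed
  have IDL: "cyclic_span N t J \<in> ?SM \<and> coeff_ideal t (cyclic_span N t J) = J" if "J \<in> ?IDL" for J
  proof -
    from that have J: "submod (*) J" "coeff_ideal t N \<subseteq> J" by auto
    have "N \<subseteq> cyclic_span N t J"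
    proof
      fix g assume "g \<in> N"
      then show "g \<in> cyclic_span N t J" unfolding cyclic_span_def using submod_zero[OF J(1)]
        by (intro CollectI exI[of _ g] exI[of _ 0]) (simp add: fsmul_zero_left)
    qed
    moreover have "cyclic_span N t J \<subseteq> cyclic_span N t UNIV" unfolding cyclic_span_def by blast
    ultimately show ?thesis using submod_cyclic_span[OF N J(1)] coeff_ideal_cyclic_span[OF N J] by blast
  qed
  have "mono (coeff_ideal t)" "mono (cyclic_span N t)"
    unfolding coeff_ideal_def cyclic_span_def by (intro monoI; blast)+
  from chain_lengths_eq_if_order_iso[OF SM IDL this]
  show ?thesis unfolding qlength_def length_quot_def by simp
qed

subsection \<open>The tensor square of a two-generated ideal\<close>

lemmas tensor_mod_cong_trans [trans] = mod_cong_trans[OF submod_tensor_rels]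

lemma tensor_smul_swap_right:
  assumes "a \<in> I" "b \<in> I" "c \<in> I"
  shows "mod_cong (tensor_rels I) (fsmul a (basis_vec b c)) (fsmul c (basis_vec b a))"
proof -
  have eq: "fsmul a (basis_vec b c) - fsmul c (basis_vec b a)
      = (basis_vec b (c * a) - fsmul c (basis_vec b a)) - (basis_vec b (a * c) - fsmul a (basis_vec b c))"
    by (simp add: mult.commute[of c a])
  show ?thesis
    unfolding mod_cong_def eq
    by (intro submod_diff[OF submod_tensor_rels] tensor_rel_smul_right assms)
qed

lemma tensor_smul_swap_left:
  assumes "a \<in> I" "b \<in> I" "c \<in> I"
  shows "mod_cong (tensor_rels I) (fsmul a (basis_vec b c)) (fsmul b (basis_vec a c))"
proof -
  have eq: "fsmul a (basis_vec b c) - fsmul b (basis_vec a c)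
      = (basis_vec (b * a) c - fsmul b (basis_vec a c)) - (basis_vec (a * b) c - fsmul a (basis_vec b c))"
    by (simp add: mult.commute[of b a])
  show ?thesis
    unfolding mod_cong_def eq
    by (intro submod_diff[OF submod_tensor_rels] tensor_rel_smul_left assms)
qed

definition tensor_comb :: "'a::comm_ring_1 \<Rightarrow> 'a \<Rightarrow> 'a \<Rightarrow> 'a \<Rightarrow> 'a \<Rightarrow> 'a \<Rightarrow> 'a \<times> 'a \<Rightarrow> 'a" where
  "tensor_comb x y c1 c2 c3 c4 = fsmul c1 (basis_vec x x) + fsmul c2 (basis_vec x y)
     + fsmul c3 (basis_vec y x) + fsmul c4 (basis_vec y y)"

lemma tensor_comb_add:
  "tensor_comb x y c1 c2 c3 c4 + tensor_comb x y d1 d2 d3 d4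
    = tensor_comb x y (c1 + d1) (c2 + d2) (c3 + d3) (c4 + d4)"
  unfolding tensor_comb_def by (rule ext) (simp add: fsmul_def algebra_simps)

lemma fsmul_tensor_comb:
  "fsmul r (tensor_comb x y c1 c2 c3 c4) = tensor_comb x y (r * c1) (r * c2) (r * c3) (r * c4)"
  unfolding tensor_comb_def by (rule ext) (simp add: fsmul_def algebra_simps)

lemma tensor_comb_zero: "tensor_comb x y 0 0 0 0 = 0"
  unfolding tensor_comb_def by (rule ext) (simp add: fsmul_def)

lemma finite_support_tensor_comb: "finite_support (tensor_comb x y c1 c2 c3 c4)"
  unfolding tensor_comb_def
  by (intro finite_support_add finite_support_fsmul finite_support_basis_vec)

lemma lin_ext_tensor_comb:
  "lin_ext w (tensor_comb x y c1 c2 c3 c4) = c1 * w (x, x) + c2 * w (x, y) + c3 * w (y, x) + c4 * w (y, y)"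
  unfolding tensor_comb_def
  by (simp only: lin_ext_add lin_ext_fsmul lin_ext_basis_vec finite_support_add
      finite_support_fsmul finite_support_basis_vec)

locale ideal_pair =
  fixes x y :: "'a::comm_ring_1"
begin

abbreviation (input) I where "I \<equiv> ideal_gen {x, y}"

lemma ideal_I: "is_ideal I"
  by (rule is_ideal_ideal_gen)

lemma x_in_I: "x \<in> I" and y_in_I: "y \<in> I"
  using ideal_gen_subset by blast+

lemma basis_vec_expand_right:
  assumes a: "a \<in> I"
  shows "mod_cong (tensor_rels I) (basis_vec a (b1 * x + b2 * y))
    (fsmul b1 (basis_vec a x) + fsmul b2 (basis_vec a y))"
proof -
  have b: "b1 * x \<in> I" "b2 * y \<in> I" using ideal_mult_left[OF ideal_I] x_in_I y_in_I by auto
  have "mod_cong (tensor_rels I) (basis_vec a (b1 * x + b2 * y)) (basis_vec a (b1 * x) + basis_vec a (b2 * y))"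
    using tensor_rel_add_right[OF a b] unfolding mod_cong_def by (simp add: algebra_simps)
  also have "mod_cong (tensor_rels I) \<dots>
      (fsmul b1 (basis_vec a x) + fsmul b2 (basis_vec a y))"
    using tensor_rel_smul_right[OF a x_in_I] tensor_rel_smul_right[OF a y_in_I]
    by (intro mod_cong_add[OF submod_tensor_rels]) (auto simp: mod_cong_def)
  finally show ?thesis .
qed

lemma basis_vec_expand_left:
  assumes b: "b \<in> I"
  shows "mod_cong (tensor_rels I) (basis_vec (a1 * x + a2 * y) b)
    (fsmul a1 (basis_vec x b) + fsmul a2 (basis_vec y b))"
proof -
  have a: "a1 * x \<in> I" "a2 * y \<in> I" using ideal_mult_left[OF ideal_I] x_in_I y_in_I by auto
  have "mod_cong (tensor_rels I) (basis_vec (a1 * x + a2 * y) b) (basis_vec (a1 * x) b + basis_vec (a2 * y) b)"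
    using tensor_rel_add_left[OF a b] unfolding mod_cong_def by (simp add: algebra_simps)
  also have "mod_cong (tensor_rels I) \<dots>
      (fsmul a1 (basis_vec x b) + fsmul a2 (basis_vec y b))"
    using tensor_rel_smul_left[OF x_in_I b] tensor_rel_smul_left[OF y_in_I b]
    by (intro mod_cong_add[OF submod_tensor_rels]) (auto simp: mod_cong_def)
  finally show ?thesis .
qed

lemma basis_vec_mod_cong_tensor_comb:
  assumes "a \<in> I" "b \<in> I"
  shows "\<exists>c1 c2 c3 c4. mod_cong (tensor_rels I) (basis_vec a b) (tensor_comb x y c1 c2 c3 c4)"
proof -
  obtain a1 a2 b1 b2 where ab: "a = a1 * x + a2 * y" "b = b1 * x + b2 * y"
    using assms unfolding ideal_gen_pair by blast
  have "mod_cong (tensor_rels I) (basis_vec a b) (fsmul b1 (basis_vec a x) + fsmul b2 (basis_vec a y))"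
    using basis_vec_expand_right[OF assms(1)] ab(2) by simp
  also have "mod_cong (tensor_rels I) \<dots>
     (fsmul b1 (fsmul a1 (basis_vec x x) + fsmul a2 (basis_vec y x))
      + fsmul b2 (fsmul a1 (basis_vec x y) + fsmul a2 (basis_vec y y)))"
    using basis_vec_expand_left[OF x_in_I] basis_vec_expand_left[OF y_in_I] ab(1)
    by (intro mod_cong_add[OF submod_tensor_rels] mod_cong_fsmul[OF submod_tensor_rels]) simp_all
  also have "\<dots> = tensor_comb x y (b1 * a1) (b2 * a1) (b1 * a2) (b2 * a2)"
    unfolding tensor_comb_def by (rule ext) (simp add: fsmul_def algebra_simps)
  finally show ?thesis by blast
qed

lemma free_mod_mod_cong_tensor_comb:
  assumes "f \<in> free_mod I"
  shows "\<exists>c1 c2 c3 c4. mod_cong (tensor_rels I) f (tensor_comb x y c1 c2 c3 c4)"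
proof -
  have "\<exists>c1 c2 c3 c4. mod_cong (tensor_rels I) f (tensor_comb x y c1 c2 c3 c4)"
    if "finite S" "{p. f p \<noteq> 0} \<subseteq> S" "\<forall>p. f p \<noteq> 0 \<longrightarrow> p \<in> I \<times> I" for S f
    using that
  proof (induction S arbitrary: f rule: finite_induct)
    case empty
    then have "f = tensor_comb x y 0 0 0 0" by (auto simp: tensor_comb_zero)
    then show ?case using mod_cong_refl[OF submod_tensor_rels] by blast
  next
    case (insert q S)
    obtain a b where q: "q = (a, b)" by (cases q)
    define f' where "f' = f - fsmul (f q) (basis_vec a b)"
    have "{p. f' p \<noteq> 0} \<subseteq> S" "\<forall>p. f' p \<noteq> 0 \<longrightarrow> p \<in> I \<times> I"
      using insert.prems q by (auto simp: f'_def fsmul_def basis_vec_def split: if_splits)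
    then obtain c1 c2 c3 c4 where c: "mod_cong (tensor_rels I) f' (tensor_comb x y c1 c2 c3 c4)"
      using insert.IH by blast
    show ?case
    proof (cases "f q = 0")
      case True
      then show ?thesis using c by (auto simp: f'_def fsmul_zero_left)
    next
      case False
      then have "a \<in> I" "b \<in> I" using insert.prems q by auto
      then obtain d1 d2 d3 d4 where d: "mod_cong (tensor_rels I) (basis_vec a b) (tensor_comb x y d1 d2 d3 d4)"
        using basis_vec_mod_cong_tensor_comb by blast
      have "mod_cong (tensor_rels I) (f' + fsmul (f q) (basis_vec a b))
          (tensor_comb x y c1 c2 c3 c4 + fsmul (f q) (tensor_comb x y d1 d2 d3 d4))"
        by (intro mod_cong_add[OF submod_tensor_rels] mod_cong_fsmul[OF submod_tensor_rels] c d)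
      moreover have "f' + fsmul (f q) (basis_vec a b) = f" unfolding f'_def by simp
      ultimately show ?thesis unfolding fsmul_tensor_comb tensor_comb_add by metis
    qed
  qed
  then show ?thesis using assms unfolding free_mod_def by blast
qed

definition wedge :: "'a \<times> 'a \<Rightarrow> 'a" where
  "wedge = basis_vec x y - basis_vec y x"

lemma finite_support_wedge: "finite_support wedge"
  unfolding wedge_def by (intro finite_support_diff finite_support_basis_vec)

lemma wedge_in_free_mod: "wedge \<in> free_mod I"
  unfolding wedge_def
  by (intro submod_diff[OF submod_free_mod] basis_vec_in_free_mod x_in_I y_in_I)

lemma fsmul_wedge_in_tensor_rels:
  assumes "r \<in> I"
  shows "fsmul r wedge \<in> tensor_rels I"
proof -
  have "mod_cong (tensor_rels I) (fsmul x (basis_vec x y)) (fsmul x (basis_vec y x))"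
  proof -
    have "mod_cong (tensor_rels I) (fsmul x (basis_vec x y)) (fsmul y (basis_vec x x))"
      by (rule tensor_smul_swap_right[OF x_in_I x_in_I y_in_I])
    also have "mod_cong (tensor_rels I) \<dots> (fsmul x (basis_vec y x))"
      by (rule mod_cong_sym[OF submod_tensor_rels tensor_smul_swap_left[OF x_in_I y_in_I x_in_I]])
    finally show ?thesis .
  qed
  moreover have "mod_cong (tensor_rels I) (fsmul y (basis_vec x y)) (fsmul y (basis_vec y x))"
  proof -
    have "mod_cong (tensor_rels I) (fsmul y (basis_vec x y)) (fsmul x (basis_vec y y))"
      by (rule tensor_smul_swap_left[OF y_in_I x_in_I y_in_I])
    also have "mod_cong (tensor_rels I) \<dots> (fsmul y (basis_vec y x))"
      by (rule mod_cong_sym[OF submod_tensor_rels tensor_smul_swap_right[OF y_in_I y_in_I x_in_I]])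
    finally show ?thesis .
  qed
  ultimately have "fsmul x wedge \<in> tensor_rels I" "fsmul y wedge \<in> tensor_rels I"
    unfolding wedge_def mod_cong_def fsmul_diff_right by simp_all
  moreover obtain p q where "r = p * x + q * y" using assms unfolding ideal_gen_pair by blast
  then have "fsmul r wedge = fsmul p (fsmul x wedge) + fsmul q (fsmul y wedge)"
    by (simp add: fsmul_fsmul fsmul_add_left)
  ultimately show ?thesis
    using submod_add[OF submod_tensor_rels] submod_smul[OF submod_tensor_rels] by metis
qed

end

definition mult_pair :: "'a::comm_ring_1 \<times> 'a \<Rightarrow> 'a" where
  "mult_pair p = fst p * snd p"

lemma lin_ext_mult_pair_tensor_rels: "f \<in> tensor_rels I \<Longrightarrow> lin_ext mult_pair f = 0"
  using lin_ext_tensor_rels[of "{0}" I mult_pair f]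
  by (simp add: is_ideal_def mult_pair_def algebra_simps)

locale regular_pair = ideal_pair x y for x y :: "'a::idom" +
  assumes x_nonzero: "x \<noteq> 0"
    and y_regular: "\<And>r. r * y \<in> ideal_gen {x} \<Longrightarrow> r \<in> ideal_gen {x}"
begin

lemma y_regular_eq: "r * y = s * x \<Longrightarrow> \<exists>t. r = t * x"
  using y_regular[of r] unfolding ideal_gen_singleton by auto

lemma coefficients_mod_I:
  assumes "p * x + q * y = p' * x + q' * y"
  shows "p - p' \<in> I" "q - q' \<in> I"
proof -
  have eq: "(q - q') * y = (p' - p) * x" using assms by (simp add: algebra_simps)
  then obtain k where k: "q - q' = k * x" using y_regular_eq by blast
  then have "x * (p' - p) = x * (k * y)" using eq by (simp add: algebra_simps)
  then have "p' - p = k * y" using x_nonzero by simp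
  then have "p - p' = (- k) * y" by (simp add: algebra_simps)
  then show "p - p' \<in> I" using ideal_mult_left[OF ideal_I y_in_I, of "- k"] by simp
  show "q - q' \<in> I" using k ideal_mult_left[OF ideal_I x_in_I] by simp
qed

lemma quadratic_syzygy:
  assumes "c1 * (x * x) + c * (x * y) + c4 * (y * y) = 0"
  shows "\<exists>\<alpha> \<beta>. c1 = - \<alpha> * y \<and> c = \<alpha> * x - \<beta> * y \<and> c4 = \<beta> * x"
proof -
  have "(c4 * y) * y = (- (c1 * x + c * y)) * x" using assms by (simp add: algebra_simps add_eq_0_iff)
  then obtain s where "c4 * y = s * x" using y_regular_eq by blast
  then obtain \<beta> where \<beta>: "c4 = \<beta> * x" using y_regular_eq by blast
  have "x * (c1 * x + (c + \<beta> * y) * y) = 0" using assms unfolding \<beta> by (simp add: algebra_simps)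
  then have e: "c1 * x + (c + \<beta> * y) * y = 0" using x_nonzero by simp
  then have "(c + \<beta> * y) * y = - (c1 * x)" by (simp add: eq_neg_iff_add_eq_0 add.commute)
  then have "(c + \<beta> * y) * y = (- c1) * x" by simp
  then obtain \<alpha> where \<alpha>: "c + \<beta> * y = \<alpha> * x" using y_regular_eq by blast
  have "x * c1 = x * (- \<alpha> * y)" using e \<alpha> by (simp add: algebra_simps add_eq_0_iff)
  then have "c1 = - \<alpha> * y" using x_nonzero mult_left_cancel by blast
  moreover have "c = \<alpha> * x - \<beta> * y" using \<alpha> by (simp add: algebra_simps)
  ultimately show ?thesis using \<beta> by blast
qed

lemma ker_mult_pair:
  assumes f: "f \<in> free_mod I" and mult: "lin_ext mult_pair f = 0"
  shows "\<exists>r. f - fsmul r wedge \<in> tensor_rels I"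
proof -
  let ?N = "tensor_rels I"
  obtain c1 c2 c3 c4 where c: "mod_cong ?N f (tensor_comb x y c1 c2 c3 c4)"
    using free_mod_mod_cong_tensor_comb[OF f] by blast
  have "finite_support f" using f unfolding free_mod_def by auto
  then have "lin_ext mult_pair (tensor_comb x y c1 c2 c3 c4) = 0"
    using lin_ext_mult_pair_tensor_rels[of _ I] c mult finite_support_tensor_comb
    by (metis lin_ext_diff mod_cong_def diff_zero diff_eq_diff_eq)
  then have "c1 * (x * x) + (c2 + c3) * (x * y) + c4 * (y * y) = 0"
    by (simp add: lin_ext_tensor_comb mult_pair_def algebra_simps)
  then obtain \<alpha> \<beta> where c1: "c1 = - \<alpha> * y" and "c2 + c3 = \<alpha> * x - \<beta> * y" and c4: "c4 = \<beta> * x"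
    using quadratic_syzygy by blast
  then have c2: "c2 = \<alpha> * x - \<beta> * y - c3" by (simp add: algebra_simps)
  text \<open>Up to a multiple of \<open>wedge\<close>, the normal form is a combination of the Koszul relations
    \<open>x (x \<otimes> y) - y (x \<otimes> x)\<close> and \<open>x (y \<otimes> y) - y (x \<otimes> y)\<close>.\<close>
  have "tensor_comb x y c1 c2 c3 c4 + fsmul c3 wedge
      = fsmul \<alpha> (fsmul x (basis_vec x y) - fsmul y (basis_vec x x))
        + fsmul \<beta> (fsmul x (basis_vec y y) - fsmul y (basis_vec x y))"
    unfolding c1 c2 c4 tensor_comb_def wedge_def by (rule ext) (simp add: fsmul_def algebra_simps)
  moreover have "fsmul x (basis_vec x y) - fsmul y (basis_vec x x) \<in> ?N"
    using tensor_smul_swap_right[OF x_in_I x_in_I y_in_I] unfolding mod_cong_def .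
  moreover have "fsmul x (basis_vec y y) - fsmul y (basis_vec x y) \<in> ?N"
    using mod_cong_sym[OF submod_tensor_rels tensor_smul_swap_left[OF y_in_I x_in_I y_in_I]]
    unfolding mod_cong_def .
  ultimately have "tensor_comb x y c1 c2 c3 c4 + fsmul c3 wedge \<in> ?N"
    using submod_add[OF submod_tensor_rels] submod_smul[OF submod_tensor_rels] by metis
  moreover have "f - fsmul (- c3) wedge
      = (f - tensor_comb x y c1 c2 c3 c4) + (tensor_comb x y c1 c2 c3 c4 + fsmul c3 wedge)"
    by (simp add: fsmul_uminus_left)
  ultimately show ?thesis
    using submod_add[OF submod_tensor_rels] c unfolding mod_cong_def by metis
qed

definition coeffs :: "'a \<Rightarrow> 'a \<times> 'a" where
  "coeffs a = (SOME pq. a = fst pq * x + snd pq * y)"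

lemma coeffs_combination: "a \<in> I \<Longrightarrow> a = fst (coeffs a) * x + snd (coeffs a) * y"
  unfolding coeffs_def ideal_gen_pair by (rule someI_ex) auto

lemma coeffs_mod_I:
  assumes "a \<in> I" "a = p * x + q * y"
  shows "fst (coeffs a) - p \<in> I" "snd (coeffs a) - q \<in> I"
  using coefficients_mod_I[of "fst (coeffs a)" "snd (coeffs a)" p q] coeffs_combination[OF assms(1)] assms(2)
  by simp_all

lemma coeffs_add:
  assumes "a \<in> I" "a' \<in> I"
  shows "fst (coeffs (a + a')) - fst (coeffs a) - fst (coeffs a') \<in> I"
    "snd (coeffs (a + a')) - snd (coeffs a) - snd (coeffs a') \<in> I"
proof -
  have "a + a' = (fst (coeffs a) + fst (coeffs a')) * x + (snd (coeffs a) + snd (coeffs a')) * y"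
    using coeffs_combination[OF assms(1)] coeffs_combination[OF assms(2)] by (simp add: algebra_simps)
  from coeffs_mod_I[OF ideal_add[OF ideal_I assms] this]
  show "fst (coeffs (a + a')) - fst (coeffs a) - fst (coeffs a') \<in> I"
    "snd (coeffs (a + a')) - snd (coeffs a) - snd (coeffs a') \<in> I"
    by (simp_all add: diff_diff_eq)
qed

lemma coeffs_mult:
  assumes "a \<in> I"
  shows "fst (coeffs (r * a)) - r * fst (coeffs a) \<in> I" "snd (coeffs (r * a)) - r * snd (coeffs a) \<in> I"
proof -
  from coeffs_combination[OF assms] have "r * a = r * (fst (coeffs a) * x + snd (coeffs a) * y)"
    by (rule arg_cong)
  also have "\<dots> = (r * fst (coeffs a)) * x + (r * snd (coeffs a)) * y"
    by (simp add: algebra_simps)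
  finally have "r * a = (r * fst (coeffs a)) * x + (r * snd (coeffs a)) * y" .
  from coeffs_mod_I[OF ideal_mult_left[OF ideal_I assms] this]
  show "fst (coeffs (r * a)) - r * fst (coeffs a) \<in> I" "snd (coeffs (r * a)) - r * snd (coeffs a) \<in> I" .
qed

text \<open>The choice of coefficients is not unique, but \<open>coeff_pairing\<close> is bilinear modulo \<open>I\<close>.\<close>
definition coeff_pairing :: "'a \<times> 'a \<Rightarrow> 'a" where
  "coeff_pairing p = fst (coeffs (fst p)) * snd (coeffs (snd p))"

lemma lin_ext_coeff_pairing_tensor_rels:
  assumes "f \<in> tensor_rels I"
  shows "lin_ext coeff_pairing f \<in> I"
proof (rule lin_ext_tensor_rels[OF ideal_I _ _ _ _ assms])
  fix a a' b assume "a \<in> I" "a' \<in> I" "b \<in> I"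
  have "coeff_pairing (a + a', b) - coeff_pairing (a, b) - coeff_pairing (a', b)
      = (fst (coeffs (a + a')) - fst (coeffs a) - fst (coeffs a')) * snd (coeffs b)"
    by (simp add: coeff_pairing_def algebra_simps)
  then show "coeff_pairing (a + a', b) - coeff_pairing (a, b) - coeff_pairing (a', b) \<in> I"
    using coeffs_add[OF \<open>a \<in> I\<close> \<open>a' \<in> I\<close>] ideal_mult_right[OF ideal_I] by simp
next
  fix a b b' assume "a \<in> I" "b \<in> I" "b' \<in> I"
  have "coeff_pairing (a, b + b') - coeff_pairing (a, b) - coeff_pairing (a, b')
      = fst (coeffs a) * (snd (coeffs (b + b')) - snd (coeffs b) - snd (coeffs b'))"
    by (simp add: coeff_pairing_def algebra_simps)
  then show "coeff_pairing (a, b + b') - coeff_pairing (a, b) - coeff_pairing (a, b') \<in> I"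
    using coeffs_add[OF \<open>b \<in> I\<close> \<open>b' \<in> I\<close>] ideal_mult_left[OF ideal_I] by simp
next
  fix r a b assume "a \<in> I" "b \<in> I"
  have "coeff_pairing (r * a, b) - r * coeff_pairing (a, b)
      = (fst (coeffs (r * a)) - r * fst (coeffs a)) * snd (coeffs b)"
    by (simp add: coeff_pairing_def algebra_simps)
  then show "coeff_pairing (r * a, b) - r * coeff_pairing (a, b) \<in> I"
    using coeffs_mult[OF \<open>a \<in> I\<close>] ideal_mult_right[OF ideal_I] by simp
  have "coeff_pairing (a, r * b) - r * coeff_pairing (a, b)
      = fst (coeffs a) * (snd (coeffs (r * b)) - r * snd (coeffs b))"
    by (simp add: coeff_pairing_def algebra_simps)
  then show "coeff_pairing (a, r * b) - r * coeff_pairing (a, b) \<in> I"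
    using coeffs_mult[OF \<open>b \<in> I\<close>] ideal_mult_left[OF ideal_I] by simp
qed

lemma lin_ext_coeff_pairing_wedge: "lin_ext coeff_pairing wedge - 1 \<in> I"
proof -
  have "fst (coeffs x) - 1 \<in> I" "snd (coeffs x) \<in> I" "snd (coeffs y) - 1 \<in> I"
    using coeffs_mod_I[OF x_in_I, of 1 0] coeffs_mod_I[OF y_in_I, of 0 1] by simp_all
  then have "(fst (coeffs x) - 1) * snd (coeffs y) + (snd (coeffs y) - 1) - fst (coeffs y) * snd (coeffs x) \<in> I"
    by (meson ideal_I ideal_add ideal_diff ideal_mult_left ideal_mult_right)
  moreover have "coeff_pairing (x, y) - coeff_pairing (y, x) - 1
      = (fst (coeffs x) - 1) * snd (coeffs y) + (snd (coeffs y) - 1) - fst (coeffs y) * snd (coeffs x)"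
    by (simp add: coeff_pairing_def algebra_simps)
  moreover have "lin_ext coeff_pairing wedge = coeff_pairing (x, y) - coeff_pairing (y, x)"
    unfolding wedge_def by (simp add: lin_ext_diff finite_support_basis_vec lin_ext_basis_vec)
  ultimately show ?thesis by (simp only:)
qed

lemma fsmul_wedge_in_tensor_rels_iff: "fsmul r wedge \<in> tensor_rels I \<longleftrightarrow> r \<in> I"
proof
  assume "fsmul r wedge \<in> tensor_rels I"
  then have "r * lin_ext coeff_pairing wedge \<in> I"
    using lin_ext_coeff_pairing_tensor_rels lin_ext_fsmul[OF finite_support_wedge] by metis
  moreover have "r * (lin_ext coeff_pairing wedge - 1) \<in> I"
    using ideal_mult_left[OF ideal_I lin_ext_coeff_pairing_wedge] .
  ultimately show "r \<in> I" using ideal_diff[OF ideal_I] by (fastforce simp: algebra_simps)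
qed (rule fsmul_wedge_in_tensor_rels)

lemma H0_tensor_eq:
  assumes x: "x \<in> the_max_ideal" and n: "power_gens the_max_ideal n \<subseteq> I"
  shows "H0_tensor I = cyclic_span (tensor_rels I) wedge UNIV"
proof
  show "H0_tensor I \<subseteq> cyclic_span (tensor_rels I) wedge UNIV"
  proof
    fix f assume "f \<in> H0_tensor I"
    then obtain k where f: "f \<in> free_mod I"
      and k: "\<forall>xs. length xs = k \<and> set xs \<subseteq> the_max_ideal \<longrightarrow> fsmul (prod_list xs) f \<in> tensor_rels I"
      unfolding H0_tensor_def by blast
    have "finite_support f" using f unfolding free_mod_def by blast
    have "set (replicate k x) \<subseteq> the_max_ideal" using x by (simp add: set_replicate_conv_if)
    then have "fsmul (x ^ k) f \<in> tensor_rels I" using k[rule_format, of "replicate k x"] by simp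
    then have "x ^ k * lin_ext mult_pair f = 0"
      using lin_ext_mult_pair_tensor_rels lin_ext_fsmul[OF \<open>finite_support f\<close>] by metis
    text \<open>\<open>R\<close> is a domain, so the multiplication map kills the \<open>m\<close>-torsion.\<close>
    then have "lin_ext mult_pair f = 0" using x_nonzero by simp
    then obtain r where "f - fsmul r wedge \<in> tensor_rels I" using ker_mult_pair[OF f] by blast
    then show "f \<in> cyclic_span (tensor_rels I) wedge UNIV"
      unfolding cyclic_span_def by (intro CollectI exI[of _ "f - fsmul r wedge"] exI[of _ r]) simp
  qed
next
  show "cyclic_span (tensor_rels I) wedge UNIV \<subseteq> H0_tensor I"
    unfolding cyclic_span_def
  proof clarify
    fix g r assume g: "g \<in> tensor_rels I"
    have "g + fsmul r wedge \<in> free_mod I"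
      using tensor_rels_subset_free_mod[OF ideal_I] g wedge_in_free_mod
        submod_add[OF submod_free_mod] submod_smul[OF submod_free_mod] by blast
    moreover have "fsmul (prod_list xs) (g + fsmul r wedge) \<in> tensor_rels I"
      if "length xs = n" "set xs \<subseteq> the_max_ideal" for xs
    proof -
      have "prod_list xs * r \<in> I"
        using that n ideal_mult_right[OF ideal_I] unfolding power_gens_def by blast
      then show ?thesis
        unfolding fsmul_add_right fsmul_fsmul
        using submod_add[OF submod_tensor_rels] submod_smul[OF submod_tensor_rels] g
          fsmul_wedge_in_tensor_rels by blast
    qed
    ultimately show "g + fsmul r wedge \<in> H0_tensor I" unfolding H0_tensor_def by blast
  qed
qed

end

subsection \<open>Cohen--Macaulay local rings of dimension two\<close>

lemma Sup_enat_mem: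
  fixes A :: "enat set"
  assumes Sup: "Sup A = enat n" and "n \<noteq> 0"
  shows "enat n \<in> A"
proof -
  have "A \<noteq> {}" using assms by (auto simp: bot_enat_def zero_enat_def)
  moreover have "finite A"
  proof (rule ccontr)
    assume "infinite A"
    then have "Sup A = \<infinity>" by (auto simp: Sup_enat_def)
    with Sup show False by simp
  qed
  ultimately have "Sup A \<in> A" by (simp add: Sup_enat_def)
  then show ?thesis using Sup by simp
qed

lemma maximal_ideal_the_max_ideal:
  assumes "local_ring TYPE('a::comm_ring_1)"
  shows "maximal_ideal (the_max_ideal :: 'a set)"
  unfolding the_max_ideal_def
  by (rule theI') (use assms in \<open>simp add: local_ring_def\<close>)

lemma is_ideal_the_max_ideal:
  "local_ring TYPE('a::comm_ring_1) \<Longrightarrow> is_ideal (the_max_ideal :: 'a set)"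
  using maximal_ideal_the_max_ideal unfolding maximal_ideal_def by blast

lemma one_not_in_the_max_ideal:
  assumes "local_ring TYPE('a::comm_ring_1)"
  shows "(1::'a) \<notin> the_max_ideal"
proof
  assume "(1::'a) \<in> the_max_ideal"
  then have "r \<in> the_max_ideal" for r :: 'a
    using ideal_mult_left[OF is_ideal_the_max_ideal[OF assms], of 1 r] by simp
  then show False using maximal_ideal_the_max_ideal[OF assms] unfolding maximal_ideal_def by blast
qed

lemma power_of_max_ideal_subset:
  assumes local: "local_ring TYPE('a::comm_ring_1)" and I: "is_ideal I"
    and rad: "radical I = the_max_ideal"
  shows "\<exists>n. power_gens (the_max_ideal :: 'a set) n \<subseteq> I"
proof -
  have "noetherian_ring TYPE('a)" using local by (simp add: local_ring_def)
  then obtain F where F: "finite F" "(the_max_ideal :: 'a set) = ideal_gen F"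
    using is_ideal_the_max_ideal[OF local] unfolding noetherian_ring_def by blast
  have "\<forall>g\<in>F. g \<in> radical I"
    using ideal_gen_subset[of F] unfolding rad F(2) by blast
  then have "\<forall>g\<in>F. \<exists>e. g ^ e \<in> I" unfolding radical_def by blast
  then show ?thesis using power_gens_subset_if_generators_nilpotent[OF I F(1)] F(2) by simp
qed

lemma cohen_macaulay_dim2_regular_sequence:
  assumes "cohen_macaulay_local TYPE('a)" "krull_dim TYPE('a) = 2"
  obtains u v :: "'a::idom" where "u \<in> the_max_ideal" "v \<in> the_max_ideal" "u \<noteq> 0"
    "\<And>r. r * v \<in> ideal_gen {u} \<Longrightarrow> r \<in> ideal_gen {u}"
proof -
  have "Sup {enat (length xs) | xs :: 'a list. regular_sequence xs} = enat 2"
    using assms unfolding cohen_macaulay_local_def depth_def by (simp add: numeral_eq_enat)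
  from Sup_enat_mem[OF this] obtain xs :: "'a list" where xs: "regular_sequence xs" "length xs = 2"
    by auto
  then obtain u v where uv: "xs = [u, v]"
    by (auto simp: numeral_2_eq_2 length_Suc_conv)
  have reg: "\<forall>i < 2. \<forall>r. r * [u, v] ! i \<in> ideal_gen (set (take i [u, v]))
      \<longrightarrow> r \<in> ideal_gen (set (take i [u, v]))"
    using xs(1) unfolding uv regular_sequence_def by simp
  have "r \<in> ideal_gen {}" if "r * u \<in> ideal_gen {}" for r
    using reg[rule_format, of 0 r] that by simp
  from this[of 1] have "u \<noteq> 0" by (auto simp: ideal_gen_empty)
  moreover have "r \<in> ideal_gen {u}" if "r * v \<in> ideal_gen {u}" for r
    using reg[rule_format, of 1 r] that by simp
  moreover have "u \<in> the_max_ideal" "v \<in> the_max_ideal"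
    using xs(1) unfolding uv regular_sequence_def by auto
  ultimately show ?thesis using that by blast
qed

lemma principal_colon_max_ideal_power:
  fixes z s :: "'a::idom"
  assumes "cohen_macaulay_local TYPE('a)" "krull_dim TYPE('a) = 2" "z \<noteq> 0"
    and "\<forall>a\<in>power_gens the_max_ideal n. a * s \<in> ideal_gen {z}"
  shows "s \<in> ideal_gen {z}"
proof -
  obtain u v :: 'a where "u \<in> the_max_ideal" "v \<in> the_max_ideal" "u \<noteq> 0"
    "\<And>r. r * v \<in> ideal_gen {u} \<Longrightarrow> r \<in> ideal_gen {u}"
    using cohen_macaulay_dim2_regular_sequence[OF assms(1,2)] by blast
  then show ?thesis using principal_colon_power assms(3,4) by blast
qed

lemma system_of_parameters2_regular_pair:
  fixes x y :: "'a::idom"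
  assumes CM: "cohen_macaulay_local TYPE('a)" "krull_dim TYPE('a) = 2"
    and sop: "system_of_parameters2 x y"
  shows "regular_pair x y"
proof
  have local: "local_ring TYPE('a)" using CM(1) by (simp add: cohen_macaulay_local_def)
  have m: "x \<in> the_max_ideal" "y \<in> the_max_ideal" "radical (ideal_gen {x, y}) = the_max_ideal"
    using sop unfolding system_of_parameters2_def by auto
  obtain n where n: "power_gens the_max_ideal n \<subseteq> ideal_gen {x, y}"
    using power_of_max_ideal_subset[OF local is_ideal_ideal_gen m(3)] by blast
  show x: "x \<noteq> 0"
  proof
    assume "x = 0"
    then have I: "ideal_gen {x, y} = ideal_gen {y}"
      unfolding ideal_gen_pair ideal_gen_singleton by auto
    obtain u :: 'a where "u \<in> the_max_ideal" "u \<noteq> 0"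
      using cohen_macaulay_dim2_regular_sequence[OF CM] by blast
    then obtain e where "u ^ e \<in> ideal_gen {y}" using m(3) I unfolding radical_def by blast
    with \<open>u \<noteq> 0\<close> have "y \<noteq> 0" by (auto simp: ideal_gen_singleton)
    have "\<forall>a\<in>power_gens the_max_ideal n. a * 1 \<in> ideal_gen {y}" using n I by auto
    then have "1 \<in> ideal_gen {y}" using principal_colon_max_ideal_power[OF CM \<open>y \<noteq> 0\<close>] by blast
    then have "(1::'a) \<in> the_max_ideal"
      using ideal_gen_least[OF is_ideal_the_max_ideal[OF local], of "{y}"] m(2) by blast
    then show False using one_not_in_the_max_ideal[OF local] by blast
  qed
  fix r assume "r * y \<in> ideal_gen {x}"
  then obtain c where c: "r * y = c * x" unfolding ideal_gen_singleton by blast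
  have "a * r \<in> ideal_gen {x}" if a: "a \<in> power_gens the_max_ideal n" for a
  proof -
    obtain p q where "a = p * x + q * y" using a n unfolding ideal_gen_pair by blast
    then have "a * r = (p * r + q * c) * x" using c by (simp add: algebra_simps)
    then show ?thesis unfolding ideal_gen_singleton by blast
  qed
  then show "r \<in> ideal_gen {x}" using principal_colon_max_ideal_power[OF CM x] by blast
qed

theorem proposition3p2:
  fixes x y :: "'a::idom"
  assumes "cohen_macaulay_local TYPE('a)"
    and "krull_dim TYPE('a) = 2"
    and "system_of_parameters2 x y"
  shows "h0_tensor_self (ideal_gen {x, y}) = length_quot (ideal_gen {x, y})"
proof -
  interpret regular_pair x y
    using system_of_parameters2_regular_pair[OF assms] .
  have "local_ring TYPE('a)" using assms(1) by (simp add: cohen_macaulay_local_def)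
  moreover have "x \<in> the_max_ideal" "radical (ideal_gen {x, y}) = the_max_ideal"
    using assms(3) unfolding system_of_parameters2_def by auto
  ultimately obtain n where "power_gens the_max_ideal n \<subseteq> ideal_gen {x, y}"
    using power_of_max_ideal_subset[OF _ ideal_I] by blast
  with \<open>x \<in> the_max_ideal\<close>
  have "H0_tensor (ideal_gen {x, y}) = cyclic_span (tensor_rels (ideal_gen {x, y})) wedge UNIV"
    by (rule H0_tensor_eq)
  moreover have "coeff_ideal wedge (tensor_rels (ideal_gen {x, y})) = ideal_gen {x, y}"
    using fsmul_wedge_in_tensor_rels_iff by (auto simp: coeff_ideal_def)
  ultimately show ?thesis
    unfolding h0_tensor_self_def using qlength_cyclic_span[OF submod_tensor_rels] by metis
qed

end
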